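(* Let $n,m$ be positive integers and let $A,B$ be positive real numbers. On the Siegel–Jacobi space $\mathbb{H}_{n,m}=\mathbb{H}_n\times\mathbb{C}^{(m,n)}$, with coordinates $(Z,W)$, $Z=X+iY$, $W=U+iV$ ($X,Y,U,V$ real), the symmetric tensor \begin{align*} ds_{n,m;A,B}^2&= A\,\sigma\big(Y^{-1}dZ\,Y^{-1}d\overline{Z}\big)\\ &\quad+B\,\Big\{\sigma\big(Y^{-1}\,{}^tV\,V\,Y^{-1}dZ\,Y^{-1}d\overline{Z}\big)+\sigma\big(Y^{-1}\,{}^t(dW)\,d\overline{W}\big)\\ &\qquad\quad-\sigma\big(V\,Y^{-1}dZ\,Y^{-1}\,{}^t(d\overline{W})\big)-\sigma\big(V\,Y^{-1}d\overline{Z}\,Y^{-1}\,{}^t(dW)\big)\Big\} \end{align*} is a Riemannian metric on $\mathbb{H}_{n,m}$ which is invariant under the natural action of the Jacobi group $G^J$ on $\mathbb{H}_{n,m}$.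
   Context: $\mathbb{H}_n=\{Z\in\mathbb{C}^{(n,n)}: Z={}^tZ,\ \operatorname{Im}Z>0\}$ is the Siegel upper half space; $\mathbb{C}^{(m,n)}$ denotes complex $m\times n$ matrices; ${}^tM$ is the transpose and $\sigma(M)$ the trace of a square matrix. $dZ=(dz_{\mu\nu})$, $d\overline Z=(d\overline z_{\mu\nu})$, $dW=(dw_{kl})$, $d\overline W=(d\overline w_{kl})$ are matrices of differentials. $Sp(n,\mathbb{R})=\{M\in\mathbb{R}^{(2n,2n)}: {}^tMJ_nM=J_n\}$ with $J_n=\begin{pmatrix}0&E_n\\-E_n&0\end{pmatrix}$, $E_n$ the identity. The Heisenberg group $H^{(n,m)}_{\mathbb{R}}=\{(\lambda,\mu;\kappa):\lambda,\mu\in\mathbb{R}^{(m,n)},\kappa\in\mathbb{R}^{(m,m)},\ \kappa+\mu\,{}^t\lambda\text{ symmetric}\}$ has product $(\lambda,\mu;\kappa)\circ(\lambda',\mu';\kappa')=(\lambda+\lambda',\mu+\mu';\kappa+\kappa'+\lambda\,{}^t\mu'-\mu\,{}^t\lambda')$. The Jacobi group is $G^J=Sp(n,\mathbb{R})\ltimes H^{(n,m)}_{\mathbb{R}}$ with product $(M,(\lambda,\mu;\kappa))\cdot(M',(\lambda',\mu';\kappa'))=(MM',(\tilde\lambda+\lambda',\tilde\mu+\mu';\kappa+\kappa'+\tilde\lambda\,{}^t\mu'-\tilde\mu\,{}^t\lambda'))$ where $(\tilde\lambda,\tilde\mu)=(\lambda,\mu)M'$. Its natural action on $\mathbb{H}_{n,m}$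 is $(M,(\lambda,\mu;\kappa))\cdot(Z,W)=\big((AZ+B)(CZ+D)^{-1},\,(W+\lambda Z+\mu)(CZ+D)^{-1}\big)$ for $M=\begin{pmatrix}A&B\\C&D\end{pmatrix}$ (here $A,B,C,D$ are the $n\times n$ blocks of $M$, unrelated to the positive constants $A,B$ of the metric). *)

theory Defs
  imports "HOL-Analysis.Analysis"
begin

text \<open>Matrices are type-indexed: an n x n complex matrix is complex^'n^'n,
  an m x n complex matrix is complex^'n^'m (rows indexed by 'm).\<close>

definition cmat :: "real^'c^'r \<Rightarrow> complex^'c^'r" where
  "cmat M = (\<chi> i j. complex_of_real (M $ i $ j))"

definition mconj :: "complex^'c^'r \<Rightarrow> complex^'c^'r" where
  "mconj M = (\<chi> i j. cnj (M $ i $ j))"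

definition mRe :: "complex^'c^'r \<Rightarrow> real^'c^'r" where
  "mRe M = (\<chi> i j. Re (M $ i $ j))"

definition mIm :: "complex^'c^'r \<Rightarrow> real^'c^'r" where
  "mIm M = (\<chi> i j. Im (M $ i $ j))"

definition symmetric_mat :: "'a^'n^'n \<Rightarrow> bool" where
  "symmetric_mat M \<longleftrightarrow> transpose M = M"

definition posdef :: "real^'n^'n \<Rightarrow> bool" where
  "posdef Y \<longleftrightarrow> symmetric_mat Y \<and> (\<forall>x. x \<noteq> 0 \<longrightarrow> x \<bullet> (Y *v x) > 0)"

definition siegel_H :: "(complex^'n^'n) set" where
  "siegel_H = {Z. symmetric_mat Z \<and> posdef (mIm Z)}"

definition siegel_jacobi :: "((complex^'n^'n) \<times> (complex^'n^'m)) set" where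
  "siegel_jacobi = siegel_H \<times> UNIV"

text \<open>2n x 2n real matrices indexed by 'n + 'n, blocks M = (A B; C D).\<close>
definition blkA :: "real^('n+'n)^('n+'n) \<Rightarrow> real^'n^'n" where
  "blkA M = (\<chi> i j. M $ Inl i $ Inl j)"
definition blkB :: "real^('n+'n)^('n+'n) \<Rightarrow> real^'n^'n" where
  "blkB M = (\<chi> i j. M $ Inl i $ Inr j)"
definition blkC :: "real^('n+'n)^('n+'n) \<Rightarrow> real^'n^'n" where
  "blkC M = (\<chi> i j. M $ Inr i $ Inl j)"
definition blkD :: "real^('n+'n)^('n+'n) \<Rightarrow> real^'n^'n" where
  "blkD M = (\<chi> i j. M $ Inr i $ Inr j)"

definition J_mat :: "real^('n::finite+'n)^('n+'n)" where
  "J_mat = (\<chi> i j. case (i, j) of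
      (Inl a, Inr b) \<Rightarrow> (if a = b then 1 else 0)
    | (Inr a, Inl b) \<Rightarrow> (if a = b then -1 else 0)
    | _ \<Rightarrow> 0)"

definition Sp :: "(real^('n::finite+'n)^('n+'n)) set" where
  "Sp = {M. transpose M ** J_mat ** M = J_mat}"

definition heisenberg :: "((real^'n^'m) \<times> (real^'n^'m) \<times> (real^'m^'m)) set" where
  "heisenberg = {(l, u, k). symmetric_mat (k + u ** transpose l)}"

definition jacobi_group ::
  "((real^('n+'n)^('n+'n)) \<times> ((real^'n^'m) \<times> (real^'n^'m) \<times> (real^'m^'m))) set" where
  "jacobi_group = Sp \<times> heisenberg"

definition jacobi_act ::
  "((real^('n+'n)^('n+'n)) \<times> ((real^'n^'m) \<times> (real^'n^'m) \<times> (real^'m^'m)))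
   \<Rightarrow> (complex^'n^'n) \<times> (complex^'n^'m) \<Rightarrow> (complex^'n^'n) \<times> (complex^'n^'m)" where
  "jacobi_act g p =
     (let M = fst g; l = fst (snd g); u = fst (snd (snd g));
          Z = fst p; W = snd p;
          R = matrix_inv (cmat (blkC M) ** Z + cmat (blkD M))
      in ((cmat (blkA M) ** Z + cmat (blkB M)) ** R,
          (W + cmat l ** Z + cmat u) ** R))"

text \<open>The tensor ds^2_{n,m;A,B} at the point (Z,W), evaluated on the
  tangent vector (dZ,dW) (dZ symmetric); its value is a complex number.\<close>
definition ds2 :: "real \<Rightarrow> real \<Rightarrow> (complex^'n^'n) \<times> (complex^'n^'m)
    \<Rightarrow> (complex^'n^'n) \<times> (complex^'n^'m) \<Rightarrow> complex" where
  "ds2 a b p v =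
     (let Z = fst p; W = snd p; dZ = fst v; dW = snd v;
          Y = mIm Z; V = cmat (mIm W); Yi = cmat (matrix_inv Y)
      in complex_of_real a * trace (Yi ** dZ ** Yi ** mconj dZ)
         + complex_of_real b *
           ( trace (Yi ** transpose V ** V ** Yi ** dZ ** Yi ** mconj dZ)
           + trace (Yi ** transpose dW ** mconj dW)
           - trace (V ** Yi ** dZ ** Yi ** transpose (mconj dW))
           - trace (V ** Yi ** mconj dZ ** Yi ** transpose dW)))"

end

theory Submission
  imports Defs
begin

text \<open>Completing the square writes ds^2 as a tr(Y^-1 dZ Y^-1 conj dZ) + b tr(Y^-1 tE conj E)
  with E = dW - V Y^-1 dZ. Both traces are Hermitian forms tr(t(conj X) Q X) with Q = Y^-1
  positive definite (for the first one after factoring Y^-1 = tL L), hence real, and positive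
  unless X = 0.

  The action of (M, (lambda, mu, kappa)) is the symplectic action (Z, W) -> ((AZ + B) R, W R),
  R = (CZ + D)^-1, preceded by the Heisenberg translation (Z, W) -> (Z, W + lambda Z + mu), which
  fixes Y and E. Under the symplectic action the relations between A, B, C, D give
  dZ -> tR dZ R, Y -> t(conj R) Y R and E -> E R, and the factors cancel in both traces.\<close>

section \<open>Matrix algebra\<close>

lemma matrix_add_rdistrib: "((A::'a::semiring_1^'n^'m) + B) ** C = A ** C + B ** C"
  by (simp add: matrix_matrix_mult_def vec_eq_iff sum.distrib distrib_right)

lemma matrix_diff_ldistrib: "(A::'a::ring_1^'n^'m) ** (B - C) = A ** B - A ** C"
  by (simp add: matrix_matrix_mult_def vec_eq_iff sum_subtractf right_diff_distrib)

lemma matrix_diff_rdistrib: "((A::'a::ring_1^'n^'m) - B) ** C = A ** C - B ** C"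
  by (simp add: matrix_matrix_mult_def vec_eq_iff sum_subtractf left_diff_distrib)

lemma matrix_mul_uminus_right: "(A::'a::ring_1^'n^'m) ** (- B) = - (A ** B)"
  by (simp add: matrix_matrix_mult_def vec_eq_iff sum_negf)

lemma transpose_0 [simp]: "transpose 0 = 0"
  by (simp add: transpose_def vec_eq_iff)

lemma transpose_eq_0_iff [simp]: "transpose A = 0 \<longleftrightarrow> A = 0"
  by (simp add: transpose_def vec_eq_iff) blast

lemma transpose_add: "transpose (A + B) = transpose A + transpose (B::'a::ab_group_add^'n^'m)"
  by (simp add: transpose_def vec_eq_iff)

lemma transpose_diff: "transpose (A - B) = transpose A - transpose (B::'a::ab_group_add^'n^'m)"
  by (simp add: transpose_def vec_eq_iff)

lemma trace_transpose: "trace (transpose A) = trace (A::'a::semiring_1^'n^'n)"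
  by (simp add: trace_def transpose_def)

lemma mat_mult_nth: "(mat c ** A) $ i $ j = c * A $ i $ j"
  by (simp add: matrix_matrix_mult_def mat_def if_distrib if_distribR cong: if_cong)

lemma matrix_mul_mat_commute: "(A::'a::comm_semiring_1^'n^'m) ** mat c = mat c ** A"
  by (simp add: vec_eq_iff mat_mult_nth)
     (simp add: matrix_matrix_mult_def mat_def if_distrib if_distribR mult.commute cong: if_cong)

lemma mat_mult_cancel: "c \<noteq> 0 \<Longrightarrow> mat c ** A = mat c ** B \<longleftrightarrow> A = (B::'a::field^'n^'m)"
  by (simp add: vec_eq_iff mat_mult_nth)

lemma matrix_mul_cancel_right: "A ** B = mat 1 \<Longrightarrow> X ** A ** B = (X::'a::semiring_1^'n^'m)"
  by (metis matrix_mul_assoc matrix_mul_rid)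

lemma matrix_inv_right: "invertible (A::'a::semiring_1^'n^'m) \<Longrightarrow> A ** matrix_inv A = mat 1"
  unfolding invertible_def matrix_inv_def by (rule someI2_ex) auto

lemma matrix_inv_left: "invertible (A::'a::semiring_1^'n^'m) \<Longrightarrow> matrix_inv A ** A = mat 1"
  unfolding invertible_def matrix_inv_def by (rule someI2_ex) auto

lemma matrix_inv_unique: "(A::'a::field^'n^'n) ** B = mat 1 \<Longrightarrow> matrix_inv A = B"
  by (metis invertible_right_inverse matrix_inv_left matrix_mul_assoc matrix_mul_lid matrix_mul_rid)

lemma transpose_matrix_inv:
  "invertible (A::'a::field^'n^'n) \<Longrightarrow> transpose (matrix_inv A) = matrix_inv (transpose A)"
  by (metis matrix_inv_left matrix_inv_unique matrix_transpose_mul transpose_mat)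

lemma invertible_iff_ker: "invertible (A::'a::field^'n^'n) \<longleftrightarrow> (\<forall>x. A *v x = 0 \<longrightarrow> x = 0)"
  by (simp add: invertible_left_inverse matrix_left_invertible_ker)

lemma cmat_mult: "cmat (A ** B) = cmat A ** cmat B"
  by (simp add: cmat_def matrix_matrix_mult_def vec_eq_iff)

lemma cmat_add: "cmat (A + B) = cmat A + cmat B"
  by (simp add: cmat_def vec_eq_iff)

lemma cmat_diff: "cmat (A - B) = cmat A - cmat B"
  by (simp add: cmat_def vec_eq_iff)

lemma cmat_transpose: "cmat (transpose A) = transpose (cmat A)"
  by (simp add: cmat_def transpose_def vec_eq_iff)

lemma cmat_mat: "cmat (mat x) = mat (of_real x)"
  by (simp add: cmat_def mat_def vec_eq_iff)

lemma mconj_mult: "mconj (A ** B) = mconj A ** mconj B"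
  by (simp add: mconj_def matrix_matrix_mult_def vec_eq_iff)

lemma mconj_add: "mconj (A + B) = mconj A + mconj B"
  by (simp add: mconj_def vec_eq_iff)

lemma mconj_diff: "mconj (A - B) = mconj A - mconj B"
  by (simp add: mconj_def vec_eq_iff)

lemma mconj_transpose: "mconj (transpose A) = transpose (mconj A)"
  by (simp add: mconj_def transpose_def vec_eq_iff)

lemma mconj_cmat [simp]: "mconj (cmat A) = cmat A"
  by (simp add: mconj_def cmat_def vec_eq_iff)

lemma mconj_mconj [simp]: "mconj (mconj A) = A"
  by (simp add: mconj_def vec_eq_iff)

lemma mconj_mat [simp]: "mconj (mat 1) = mat 1"
  by (simp add: mconj_def mat_def vec_eq_iff)

lemma mconj_0 [simp]: "mconj 0 = 0"
  by (simp add: mconj_def vec_eq_iff)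

lemma trace_mconj: "trace (mconj A) = cnj (trace A)"
  by (simp add: trace_def mconj_def)

lemma diff_mconj_eq_mIm: "X - mconj X = mat (2 * \<i>) ** cmat (mIm X)"
  by (simp add: vec_eq_iff mat_mult_nth mconj_def cmat_def mIm_def complex_eq_iff)

lemma mIm_add: "mIm (A + B) = mIm A + mIm B"
  by (simp add: mIm_def vec_eq_iff)

lemma mIm_cmat [simp]: "mIm (cmat A) = 0"
  by (simp add: mIm_def cmat_def vec_eq_iff)

lemma mIm_cmat_mult: "mIm (cmat A ** X) = A ** mIm X"
  by (simp add: mIm_def cmat_def matrix_matrix_mult_def vec_eq_iff Im_sum)

lemma mIm_transpose: "mIm (transpose Z) = transpose (mIm Z)"
  by (simp add: mIm_def transpose_def vec_eq_iff)

lemma mRe_cmat [simp]: "mRe (cmat A) = A"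
  by (simp add: mRe_def cmat_def vec_eq_iff)

lemma cmat_matrix_inv:
  fixes Y :: "real^'n^'n"
  assumes "invertible Y"
  shows "cmat (matrix_inv Y) = matrix_inv (cmat Y)"
proof -
  have "cmat Y ** cmat (matrix_inv Y) = mat 1"
    by (simp add: cmat_mult [symmetric] matrix_inv_right[OF assms] cmat_mat)
  then show ?thesis
    by (rule matrix_inv_unique [symmetric])
qed

section \<open>Positive definite matrices and Hermitian forms\<close>

definition psd :: "real^'n^'n \<Rightarrow> bool" where
  "psd Q \<longleftrightarrow> symmetric_mat Q \<and> (\<forall>x. 0 \<le> x \<bullet> (Q *v x))"

lemma symmetric_mat_nth: "symmetric_mat Q \<Longrightarrow> Q $ i $ j = Q $ j $ i"
  unfolding symmetric_mat_def transpose_def by (simp add: vec_eq_iff)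

lemma inner_symmetric_mat:
  fixes Q :: "real^'n^'n"
  assumes "symmetric_mat Q"
  shows "x \<bullet> (Q *v y) = y \<bullet> (Q *v x)"
proof -
  have "x \<bullet> (Q *v y) = (x v* Q) \<bullet> y"
    by (simp add: dot_lmul_matrix)
  also have "x v* Q = Q *v x"
    using assms by (metis symmetric_mat_def transpose_matrix_vector)
  finally show ?thesis
    by (simp add: inner_commute)
qed

lemma quadratic_form_add:
  fixes Q :: "real^'n^'n"
  assumes "symmetric_mat Q"
  shows "(x + t *\<^sub>R e) \<bullet> (Q *v (x + t *\<^sub>R e))
     = x \<bullet> (Q *v x) + 2 * t * (e \<bullet> (Q *v x)) + t\<^sup>2 * (e \<bullet> (Q *v e))"
  using inner_symmetric_mat[OF assms, of x e]
  by (simp add: matrix_vector_right_distrib matrix_vector_mult_scaleR inner_add_left inner_add_right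
      algebra_simps power2_eq_square)

lemma axis_inner_matrix_vector: "axis i 1 \<bullet> (Q *v x) = (Q *v x) $ i"
  by (simp add: inner_axis')

lemma matrix_vector_axis_nth: "(Q *v axis j 1) $ i = Q $ i $ j"
  by (simp add: matrix_vector_mult_def axis_def if_distrib cong: if_cong)

lemma quadratic_form_outer: "x \<bullet> ((\<chi> a b. q$a * q$b) *v x) = (q \<bullet> x)\<^sup>2" for q x :: "real^'n"
  by (simp add: inner_vec_def matrix_vector_mult_def power2_eq_square sum_product sum_distrib_left
      mult_ac)

lemma psd_diag_zero:
  fixes Q :: "real^'n^'n"
  assumes "psd Q" and "Q $ i $ i = 0"
  shows "Q $ i $ j = 0"
proof (rule ccontr)
  assume nz: "Q $ i $ j \<noteq> 0"
  let ?e = "axis i 1" and ?x = "axis j 1"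
  define t where "t = - (?x \<bullet> (Q *v ?x) + 1) / (2 * Q $ i $ j)"
  have "0 \<le> (?x + t *\<^sub>R ?e) \<bullet> (Q *v (?x + t *\<^sub>R ?e))"
    using assms(1) by (simp add: psd_def)
  also have "\<dots> = ?x \<bullet> (Q *v ?x) + 2 * t * Q $ i $ j"
    using assms by (simp add: quadratic_form_add psd_def axis_inner_matrix_vector matrix_vector_axis_nth)
  also have "\<dots> = -1"
    using nz by (simp add: t_def field_simps)
  finally show False by simp
qed

lemma psd_schur_complement:
  fixes Q :: "real^'n^'n"
  assumes Q: "psd Q" and c: "0 < Q $ i $ i"
  defines "q \<equiv> (1 / sqrt (Q $ i $ i)) *\<^sub>R row i Q"
  shows "psd (Q - (\<chi> a b. q$a * q$b))"
  unfolding psd_def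
proof (intro conjI allI)
  have sym: "symmetric_mat Q" using Q by (simp add: psd_def)
  then show "symmetric_mat (Q - (\<chi> a b. q$a * q$b))"
    by (simp add: symmetric_mat_def transpose_def vec_eq_iff mult.commute)
  fix x
  define \<beta> where "\<beta> = (Q *v x) $ i"
  define t where "t = - \<beta> / Q $ i $ i"
  have "row i Q \<bullet> x = \<beta>"
    by (simp add: \<beta>_def row_def inner_vec_def matrix_vector_mult_def mult.commute)
  then have qx: "(q \<bullet> x)\<^sup>2 = \<beta>\<^sup>2 / Q $ i $ i"
    using c by (simp add: q_def power_divide)
  have "0 \<le> (x + t *\<^sub>R axis i 1) \<bullet> (Q *v (x + t *\<^sub>R axis i 1))"
    using Q by (simp add: psd_def)
  also have "\<dots> = x \<bullet> (Q *v x) + 2 * t * \<beta> + t\<^sup>2 * Q $ i $ i"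
    unfolding quadratic_form_add[OF sym] axis_inner_matrix_vector matrix_vector_axis_nth \<beta>_def ..
  also have "\<dots> = x \<bullet> (Q *v x) - \<beta>\<^sup>2 / Q $ i $ i"
    using c by (simp add: t_def field_simps power2_eq_square)
  also have "\<dots> = x \<bullet> ((Q - (\<chi> a b. q$a * q$b)) *v x)"
    by (simp add: matrix_vector_mult_diff_rdistrib inner_diff_right quadratic_form_outer qx)
  finally show "0 \<le> x \<bullet> ((Q - (\<chi> a b. q$a * q$b)) *v x)" .
qed

lemma row_schur_complement_eq_0:
  fixes Q :: "real^'n^'n"
  assumes sym: "symmetric_mat Q" and c: "0 < Q $ i $ i" and k: "k = i \<or> row k Q = 0"
  defines "q \<equiv> (1 / sqrt (Q $ i $ i)) *\<^sub>R row i Q"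
  shows "row k (Q - (\<chi> a b. q$a * q$b)) = 0"
  using k
proof
  assume "k = i"
  then show ?thesis
    using c by (simp add: q_def row_def vec_eq_iff power2_eq_square [symmetric])
next
  assume "row k Q = 0"
  moreover have "q $ k = 0"
    using \<open>row k Q = 0\<close> symmetric_mat_nth[OF sym, of i k]
    by (simp add: q_def row_def vec_eq_iff)
  ultimately show ?thesis
    by (simp add: row_def vec_eq_iff)
qed

lemma transpose_mult_self_replace_row:
  fixes L :: "real^'n^'n" and q :: "real^'n"
  assumes "L $ i = 0"
  defines "L' \<equiv> \<chi> k. if k = i then q else L $ k"
  shows "transpose L' ** L' = transpose L ** L + (\<chi> a b. q$a * q$b)"
proof -
  have "(transpose L' ** L') $ a $ b = (transpose L ** L) $ a $ b + q$a * q$b" for a b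
  proof -
    have "(transpose L' ** L') $ a $ b = (\<Sum>k\<in>UNIV. L$k$a * L$k$b + (if k = i then q$a * q$b else 0))"
      using assms(1) by (auto simp: L'_def matrix_matrix_mult_def transpose_def intro!: sum.cong)
    then show ?thesis
      by (simp add: sum.distrib matrix_matrix_mult_def transpose_def)
  qed
  then show ?thesis by (simp add: vec_eq_iff)
qed

text \<open>Symmetric Gaussian elimination. Keeping the rows outside S zero leaves the row of the
  pivot free in the factor obtained by induction.\<close>
lemma psd_factorization_supported:
  fixes Q :: "real^'n^'n"
  assumes "finite S" and "psd Q" and "\<forall>k. k \<notin> S \<longrightarrow> row k Q = 0"
  shows "\<exists>L. Q = transpose L ** L \<and> (\<forall>k. k \<notin> S \<longrightarrow> L $ k = 0)"
  using assms
proof (induction S arbitrary: Q rule: finite_induct)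
  case empty
  then have "Q = 0" by (simp add: vec_eq_iff row_def)
  then show ?case by (intro exI[of _ 0]) simp
next
  case (insert i S)
  have sym: "symmetric_mat Q"
    using insert.prems(1) by (simp add: psd_def)
  show ?case
  proof (cases "Q $ i $ i = 0")
    case True
    then have "row i Q = 0"
      using psd_diag_zero[OF insert.prems(1)] by (simp add: row_def vec_eq_iff)
    then obtain L where "Q = transpose L ** L" "\<forall>k. k \<notin> S \<longrightarrow> L $ k = 0"
      using insert.IH[OF insert.prems(1)] insert.prems(2) by (metis insert_iff)
    then show ?thesis by auto
  next
    case False
    have "0 \<le> axis i 1 \<bullet> (Q *v axis i 1)"
      using insert.prems(1) by (simp add: psd_def)
    with False have c: "0 < Q $ i $ i"
      by (simp add: axis_inner_matrix_vector matrix_vector_axis_nth)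
    define q where "q = (1 / sqrt (Q $ i $ i)) *\<^sub>R row i Q"
    define Q' where "Q' = Q - (\<chi> a b. q$a * q$b)"
    have "psd Q'"
      unfolding Q'_def q_def by (rule psd_schur_complement[OF insert.prems(1) c])
    moreover have "row k Q' = 0" if "k \<notin> S" for k
      using that insert.prems(2) unfolding Q'_def q_def
      by (intro row_schur_complement_eq_0[OF sym c]) auto
    ultimately obtain L where L: "Q' = transpose L ** L" "\<forall>k. k \<notin> S \<longrightarrow> L $ k = 0"
      using insert.IH by blast
    define L' where "L' = (\<chi> k. if k = i then q else L $ k)"
    have "Q = transpose L' ** L'"
      unfolding L'_def transpose_mult_self_replace_row[OF L(2)[rule_format, OF insert.hyps(2)]]
      by (simp add: L(1)[symmetric] Q'_def)
    moreover have "\<forall>k. k \<notin> insert i S \<longrightarrow> L' $ k = 0"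
      using L(2) by (simp add: L'_def)
    ultimately show ?thesis by blast
  qed
qed

lemma psd_factorization:
  fixes Q :: "real^'n^'n"
  assumes "psd Q"
  shows "\<exists>L :: real^'n^'n. Q = transpose L ** L"
  using psd_factorization_supported[OF finite_class.finite_UNIV assms] by blast

lemma posdef_imp_psd: "posdef Y \<Longrightarrow> psd Y"
  unfolding posdef_def psd_def by (metis inner_zero_left less_eq_real_def order_refl)

lemma posdef_invertible: "posdef Y \<Longrightarrow> invertible Y"
  unfolding invertible_iff_ker posdef_def by (metis inner_zero_right less_irrefl)

lemma posdef_matrix_inv:
  fixes Y :: "real^'n^'n"
  assumes Y: "posdef Y"
  shows "posdef (matrix_inv Y)"
  unfolding posdef_def
proof (intro conjI allI impI)
  show "symmetric_mat (matrix_inv Y)"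
    using Y posdef_invertible[OF Y]
    by (simp add: posdef_def symmetric_mat_def transpose_matrix_inv)
  fix x :: "real^'n" assume "x \<noteq> 0"
  have YQ: "Y *v (matrix_inv Y *v x) = x"
    by (simp add: matrix_vector_mul_assoc matrix_inv_right[OF posdef_invertible[OF Y]])
  then have "matrix_inv Y *v x \<noteq> 0"
    using \<open>x \<noteq> 0\<close> by auto
  then have "0 < (matrix_inv Y *v x) \<bullet> (Y *v (matrix_inv Y *v x))"
    using Y by (simp add: posdef_def)
  then show "0 < x \<bullet> (matrix_inv Y *v x)"
    by (simp add: YQ inner_commute)
qed

lemma posdef_factorization:
  fixes Y :: "real^'n^'n"
  assumes Y: "posdef Y"
  shows "\<exists>L :: real^'n^'n. invertible L \<and> Y = transpose L ** L"
proof -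
  obtain L :: "real^'n^'n" where L: "Y = transpose L ** L"
    using psd_factorization[OF posdef_imp_psd[OF Y]] by blast
  have "x = 0" if "L *v x = 0" for x
  proof -
    have "x \<bullet> (Y *v x) = ((L *v x) v* L) \<bullet> x"
      by (simp add: L matrix_vector_mul_assoc [symmetric] inner_commute)
    also have "\<dots> = (L *v x) \<bullet> (L *v x)"
      by (rule dot_lmul_matrix)
    finally have "x \<bullet> (Y *v x) = (L *v x) \<bullet> (L *v x)" .
    then show ?thesis
      using Y that by (metis inner_zero_left less_irrefl posdef_def)
  qed
  then show ?thesis
    using L by (auto simp: invertible_iff_ker)
qed

lemma Re_trace_hermitian_form:
  fixes X :: "complex^'k^'n" and Y :: "real^'n^'n"
  shows "Re (trace (transpose (mconj X) ** cmat Y ** X))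
       = (\<Sum>j\<in>UNIV. column j (mRe X) \<bullet> (Y *v column j (mRe X))
                   + column j (mIm X) \<bullet> (Y *v column j (mIm X)))"
proof -
  have re: "Re (cnj z * complex_of_real r * w) = Re z * r * Re w + Im z * r * Im w" for z w r
    by (simp add: algebra_simps)
  have "Re (trace (transpose (mconj X) ** cmat Y ** X))
      = (\<Sum>j\<in>UNIV. \<Sum>b\<in>UNIV. \<Sum>a\<in>UNIV.
           Re (X$a$j) * Y$a$b * Re (X$b$j) + Im (X$a$j) * Y$a$b * Im (X$b$j))"
    by (simp add: trace_def matrix_matrix_mult_def transpose_def mconj_def cmat_def
        sum_distrib_right Re_sum re)
  also have "\<dots> = (\<Sum>j\<in>UNIV. \<Sum>a\<in>UNIV. \<Sum>b\<in>UNIV.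
           Re (X$a$j) * Y$a$b * Re (X$b$j) + Im (X$a$j) * Y$a$b * Im (X$b$j))"
    by (rule sum.cong[OF refl], rule sum.swap)
  also have "\<dots> = (\<Sum>j\<in>UNIV. column j (mRe X) \<bullet> (Y *v column j (mRe X))
                   + column j (mIm X) \<bullet> (Y *v column j (mIm X)))"
    by (simp add: inner_vec_def matrix_vector_mult_def column_def mRe_def mIm_def
        sum_distrib_left sum.distrib mult.assoc)
  finally show ?thesis .
qed

lemma Im_trace_hermitian_form:
  fixes X :: "complex^'k^'n" and Y :: "real^'n^'n"
  assumes "symmetric_mat Y"
  shows "Im (trace (transpose (mconj X) ** cmat Y ** X)) = 0"
proof -
  let ?t = "trace (transpose (mconj X) ** cmat Y ** X)"
  have "cnj ?t = trace (transpose (transpose X ** cmat Y ** mconj X))"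
    by (simp add: trace_mconj [symmetric] trace_transpose mconj_mult mconj_transpose)
  also have "\<dots> = ?t"
    using assms by (simp add: matrix_transpose_mul symmetric_mat_def cmat_transpose [symmetric]
        matrix_mul_assoc)
  finally have "Im (cnj ?t) = Im ?t"
    by simp
  then show ?thesis
    by simp
qed

lemma Re_trace_hermitian_form_nonneg:
  fixes X :: "complex^'k^'n" and Y :: "real^'n^'n"
  assumes "psd Y"
  shows "0 \<le> Re (trace (transpose (mconj X) ** cmat Y ** X))"
  using assms by (simp add: Re_trace_hermitian_form psd_def sum_nonneg add_nonneg_nonneg)

lemma Re_trace_hermitian_form_pos:
  fixes X :: "complex^'k^'n" and Y :: "real^'n^'n"
  assumes Y: "posdef Y" and "X \<noteq> 0"
  shows "0 < Re (trace (transpose (mconj X) ** cmat Y ** X))"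
proof -
  obtain a j where "X $ a $ j \<noteq> 0"
    using \<open>X \<noteq> 0\<close> by (auto simp: vec_eq_iff)
  then have "column j (mRe X) \<noteq> 0 \<or> column j (mIm X) \<noteq> 0"
    by (auto simp: column_def mRe_def mIm_def vec_eq_iff complex_eq_iff)
  then have "0 < column j (mRe X) \<bullet> (Y *v column j (mRe X)) + column j (mIm X) \<bullet> (Y *v column j (mIm X))"
    using Y posdef_imp_psd[OF Y] unfolding posdef_def psd_def
    by (auto intro: add_pos_nonneg add_nonneg_pos)
  then show ?thesis
    unfolding Re_trace_hermitian_form
    using posdef_imp_psd[OF Y]
    by (intro sum_pos2[where i = j]) (auto simp: psd_def add_nonneg_nonneg)
qed

lemma hermitian_form_diff_mconj:
  "transpose (mconj X) ** (Z - mconj Z) ** X = mat (2 * \<i>) ** (transpose (mconj X) ** cmat (mIm Z) ** X)"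
  by (simp add: diff_mconj_eq_mIm matrix_mul_assoc matrix_mul_mat_commute)

section \<open>Positivity of the metric\<close>

lemma trace_completed_square:
  fixes Q :: "complex^'n^'n" and V dW :: "complex^'n^'m"
  assumes dZ: "transpose dZ = dZ" and Qt: "transpose Q = Q"
    and Qc: "mconj Q = Q" and Vc: "mconj V = V"
  shows "trace (Q ** transpose V ** V ** Q ** dZ ** Q ** mconj dZ)
           + trace (Q ** transpose dW ** mconj dW)
           - trace (V ** Q ** dZ ** Q ** transpose (mconj dW))
           - trace (V ** Q ** mconj dZ ** Q ** transpose dW)
       = trace (Q ** transpose (dW - V ** Q ** dZ) ** mconj (dW - V ** Q ** dZ))"
proof -
  have dZc: "transpose (mconj dZ) = mconj dZ"
    by (metis dZ mconj_transpose)
  have "Q ** transpose (dW - V ** Q ** dZ) ** mconj (dW - V ** Q ** dZ)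
     = Q ** transpose dW ** mconj dW - Q ** transpose dW ** V ** Q ** mconj dZ
       - Q ** dZ ** Q ** transpose V ** mconj dW + Q ** dZ ** Q ** transpose V ** V ** Q ** mconj dZ"
    by (simp add: transpose_diff matrix_transpose_mul dZ Qt mconj_diff mconj_mult Qc Vc
        matrix_diff_ldistrib matrix_diff_rdistrib matrix_mul_assoc algebra_simps)
  then have "trace (Q ** transpose (dW - V ** Q ** dZ) ** mconj (dW - V ** Q ** dZ))
     = trace (Q ** transpose dW ** mconj dW) - trace (Q ** transpose dW ** V ** Q ** mconj dZ)
       - trace (Q ** dZ ** Q ** transpose V ** mconj dW)
       + trace (Q ** dZ ** Q ** transpose V ** V ** Q ** mconj dZ)"
    by (simp add: trace_add trace_sub)
  moreover have "trace (Q ** transpose dW ** V ** Q ** mconj dZ)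
      = trace (V ** Q ** mconj dZ ** Q ** transpose dW)"
    using trace_mul_sym[of "Q ** transpose dW" "V ** Q ** mconj dZ"] by (simp add: matrix_mul_assoc)
  moreover have "trace (Q ** dZ ** Q ** transpose V ** mconj dW)
      = trace (V ** Q ** dZ ** Q ** transpose (mconj dW))"
    using trace_transpose[of "Q ** dZ ** Q ** transpose V ** mconj dW"]
      trace_mul_sym[of "transpose (mconj dW)" "V ** Q ** dZ ** Q"]
    by (simp add: matrix_transpose_mul dZ Qt matrix_mul_assoc)
  moreover have "trace (Q ** dZ ** Q ** transpose V ** V ** Q ** mconj dZ)
      = trace (Q ** transpose V ** V ** Q ** dZ ** Q ** mconj dZ)"
    using trace_mul_sym[of "Q ** dZ" "Q ** transpose V ** V ** Q ** mconj dZ"]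
      trace_transpose[of "Q ** transpose V ** V ** Q ** mconj dZ ** Q ** dZ"]
      trace_mul_sym[of "dZ ** Q ** mconj dZ" "Q ** transpose V ** V ** Q"]
    by (simp add: matrix_transpose_mul dZ Qt dZc matrix_mul_assoc)
  ultimately show ?thesis by simp
qed

lemma ds2_completed_square:
  fixes Z dZ :: "complex^'n^'n" and W dW :: "complex^'n^'m"
  assumes Y: "posdef (mIm Z)" and dZ: "symmetric_mat dZ"
  defines "Q \<equiv> cmat (matrix_inv (mIm Z))"
  defines "E \<equiv> dW - cmat (mIm W) ** Q ** dZ"
  shows "ds2 a b (Z, W) (dZ, dW)
       = of_real a * trace (Q ** dZ ** Q ** mconj dZ) + of_real b * trace (Q ** transpose E ** mconj E)"
proof -
  have "transpose Q = Q"
    using posdef_matrix_inv[OF Y]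
    by (simp add: Q_def cmat_transpose [symmetric] posdef_def symmetric_mat_def)
  then show ?thesis
    using trace_completed_square[of dZ Q "cmat (mIm W)" dW] dZ
    by (simp add: ds2_def Let_def Q_def E_def symmetric_mat_def)
qed

lemma ds2_eq_hermitian_forms:
  fixes Z dZ :: "complex^'n^'n" and W dW :: "complex^'n^'m" and L :: "real^'n^'n"
  assumes Y: "posdef (mIm Z)" and dZ: "symmetric_mat dZ" and L: "matrix_inv (mIm Z) = transpose L ** L"
  defines "Q \<equiv> cmat (matrix_inv (mIm Z))"
  defines "X1 \<equiv> mconj dZ ** transpose (cmat L)"
    and "X2 \<equiv> transpose (dW - cmat (mIm W) ** Q ** dZ)"
  shows "ds2 a b (Z, W) (dZ, dW)
       = of_real a * trace (transpose (mconj X1) ** Q ** X1)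
       + of_real b * trace (transpose (mconj X2) ** Q ** X2)"
proof -
  have "trace (transpose (mconj X1) ** Q ** X1)
      = trace (transpose (cmat L) ** (cmat L ** dZ ** Q ** mconj dZ))"
    using trace_mul_sym[of "cmat L ** dZ ** Q ** mconj dZ" "transpose (cmat L)"] dZ
    by (simp add: X1_def mconj_mult mconj_transpose matrix_transpose_mul symmetric_mat_def
        matrix_mul_assoc)
  also have "\<dots> = trace (Q ** dZ ** Q ** mconj dZ)"
    by (simp add: Q_def L cmat_mult cmat_transpose matrix_mul_assoc)
  finally have T1: "trace (Q ** dZ ** Q ** mconj dZ) = trace (transpose (mconj X1) ** Q ** X1)" ..
  let ?E = "dW - cmat (mIm W) ** Q ** dZ"
  have T2: "trace (Q ** transpose ?E ** mconj ?E) = trace (transpose (mconj X2) ** Q ** X2)"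
    using trace_mul_sym[of "Q ** transpose ?E" "mconj ?E"]
    by (simp add: X2_def mconj_transpose matrix_mul_assoc)
  show ?thesis
    using ds2_completed_square[OF Y dZ, of a b W dW] T1 T2
    by (simp add: Q_def)
qed

lemma ds2_positive:
  fixes p v :: "(complex^'n^'n) \<times> (complex^'n^'m)"
  assumes a: "0 < a" and b: "0 < b" and p: "p \<in> siegel_jacobi" and v: "symmetric_mat (fst v)"
  shows "Im (ds2 a b p v) = 0 \<and> (v \<noteq> 0 \<longrightarrow> 0 < Re (ds2 a b p v))"
proof -
  obtain Z W dZ dW where pv: "p = (Z, W)" "v = (dZ, dW)"
    by (cases p, cases v)
  have Y: "posdef (mIm Z)" and dZ: "symmetric_mat dZ"
    using p v by (simp_all add: pv siegel_jacobi_def siegel_H_def)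
  have Q: "posdef (matrix_inv (mIm Z))"
    by (rule posdef_matrix_inv[OF Y])
  then obtain L :: "real^'n^'n" where L: "invertible L" "matrix_inv (mIm Z) = transpose L ** L"
    using posdef_factorization by blast
  define X1 where "X1 = mconj dZ ** transpose (cmat L)"
  define X2 where "X2 = transpose (dW - cmat (mIm W) ** cmat (matrix_inv (mIm Z)) ** dZ)"
  let ?t = "\<lambda>X. trace (transpose (mconj X) ** cmat (matrix_inv (mIm Z)) ** X)"
  have ds2: "ds2 a b p v = of_real a * ?t X1 + of_real b * ?t X2"
    using ds2_eq_hermitian_forms[OF Y dZ L(2), of a b W dW] by (simp add: pv X1_def X2_def)
  have "Im (ds2 a b p v) = 0"
    using Q by (simp add: ds2 Im_trace_hermitian_form posdef_def)
  moreover have "0 < Re (ds2 a b p v)" if "v \<noteq> 0"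
  proof -
    have "X1 \<noteq> 0 \<or> X2 \<noteq> 0"
    proof (cases "dZ = 0")
      case True
      with that have "dW \<noteq> 0" by (simp add: pv zero_prod_def)
      with True show ?thesis by (simp add: X2_def)
    next
      case False
      have "mconj dZ = X1 ** transpose (cmat (matrix_inv L))"
        by (simp add: X1_def matrix_mul_assoc [symmetric] matrix_transpose_mul [symmetric]
            cmat_mult [symmetric] matrix_inv_left[OF L(1)] cmat_mat)
      with False show ?thesis
        by (metis mconj_0 mconj_mconj times0_left)
    qed
    then have "0 < a * Re (?t X1) \<or> 0 < b * Re (?t X2)"
      using Re_trace_hermitian_form_pos[OF Q, of X1] Re_trace_hermitian_form_pos[OF Q, of X2] a b
      by (auto simp: zero_less_mult_iff)
    moreover have "0 \<le> a * Re (?t X1)" "0 \<le> b * Re (?t X2)"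
      using Re_trace_hermitian_form_nonneg[OF posdef_imp_psd[OF Q], of X1]
        Re_trace_hermitian_form_nonneg[OF posdef_imp_psd[OF Q], of X2] a b
      by (simp_all add: zero_le_mult_iff)
    ultimately show ?thesis
      by (simp add: ds2) linarith
  qed
  ultimately show ?thesis by blast
qed

section \<open>Derivative of the matrix inverse\<close>

lemma bounded_bilinear_matrix_mult:
  "bounded_bilinear ((**) :: 'a::{real_normed_field, euclidean_space}^'k^'m \<Rightarrow> 'a^'n^'k \<Rightarrow> 'a^'n^'m)"
  unfolding bilinear_conv_bounded_bilinear [symmetric] bilinear_def linear_iff
  by (simp add: matrix_add_ldistrib matrix_add_rdistrib scalar_matrix_assoc matrix_scalar_ac)

lemma differentiable_vec_lambda:
  fixes f :: "'a::real_normed_vector \<Rightarrow> 'i::finite \<Rightarrow> 'b::euclidean_space"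
  assumes "\<And>i. (\<lambda>x. f x i) differentiable (at x0)"
  shows "(\<lambda>x. \<chi> i. f x i) differentiable (at x0)"
proof -
  have "bounded_linear (axis i :: 'b \<Rightarrow> 'b^'i)" for i
    unfolding linear_conv_bounded_linear [symmetric] linear_iff
    by (simp add: axis_def vec_eq_iff)
  then have "(\<lambda>x. axis i (f x i)) differentiable (at x0)" for i
    using assms by (rule differentiable_compose[OF bounded_linear_imp_differentiable])
  then have "(\<lambda>x. \<Sum>i\<in>UNIV. axis i (f x i)) differentiable (at x0)"
    by simp
  moreover have "(\<lambda>x. \<Sum>i\<in>UNIV. axis i (f x i)) = (\<lambda>x. \<chi> i. f x i)"
    by (simp add: fun_eq_iff vec_eq_iff axis_def if_distrib cong: if_cong)
  ultimately show ?thesis by simp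
qed

lemma differentiable_det:
  fixes F :: "'a::real_normed_vector \<Rightarrow> 'b::real_normed_field^'n^'n"
  assumes F: "\<And>i j. (\<lambda>x. F x $ i $ j) differentiable (at x0)"
  shows "(\<lambda>x. det (F x)) differentiable (at x0)"
proof -
  have "(\<lambda>x. \<Prod>i\<in>UNIV. F x $ i $ p i) differentiable (at x0)" for p :: "'n \<Rightarrow> 'n"
  proof -
    have "\<forall>i. \<exists>D. ((\<lambda>x. F x $ i $ p i) has_derivative D) (at x0)"
      using F unfolding differentiable_def by blast
    from choice[OF this] obtain F' where "\<forall>i. ((\<lambda>x. F x $ i $ p i) has_derivative F' i) (at x0)" ..
    then have "((\<lambda>x. \<Prod>i\<in>UNIV. F x $ i $ p i) has_derivative
        (\<lambda>y. \<Sum>i\<in>UNIV. F' i y * (\<Prod>j\<in>UNIV - {i}. F x0 $ j $ p j))) (at x0)"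
      by (intro has_derivative_prod) blast
    then show ?thesis
      unfolding differentiable_def by blast
  qed
  then show ?thesis
    unfolding det_def by (intro differentiable_sum differentiable_mult differentiable_const) auto
qed

lemma matrix_inv_cramer:
  fixes P :: "'a::field^'n^'n"
  assumes "det P \<noteq> 0"
  shows "matrix_inv P $ k $ j = det (\<chi> a b. if b = k then (if a = j then 1 else 0) else P $ a $ b) / det P"
proof -
  have "P *v (matrix_inv P *v axis j 1) = axis j 1"
    using assms by (simp add: matrix_vector_mul_assoc matrix_inv_right invertible_det_nz)
  have "matrix_inv P $ k $ j = (matrix_inv P *v axis j 1) $ k"
    by (simp add: matrix_vector_mult_def axis_def if_distrib cong: if_cong)
  also have "\<dots> = det (\<chi> a b. if b = k then axis j 1 $ a else P $ a $ b) / det P"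
    using cramer[OF assms] \<open>P *v (matrix_inv P *v axis j 1) = axis j 1\<close> by simp
  also have "(\<chi> a b. if b = k then axis j 1 $ a else P $ a $ b)
      = (\<chi> a b. if b = k then (if a = j then 1 else 0) else P $ a $ b)"
    by (simp add: axis_def cong: if_cong)
  finally show ?thesis .
qed

lemma differentiable_matrix_entry:
  fixes f :: "'a::real_normed_vector \<Rightarrow> 'b::real_normed_vector^'n^'m"
  assumes "f differentiable (at x)"
  shows "(\<lambda>x. f x $ i $ j) differentiable (at x)"
proof -
  have "bounded_linear (\<lambda>M :: 'b^'n^'m. M $ i $ j)"
    by (rule bounded_linear_compose[OF bounded_linear_vec_nth bounded_linear_vec_nth])
  then show ?thesis
    using assms by (rule differentiable_compose[OF bounded_linear_imp_differentiable])
qed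

lemma differentiable_det_at: "det differentiable (at (X :: 'a::real_normed_field^'n^'n))"
  by (intro differentiable_det differentiable_matrix_entry) simp

lemma open_invertible: "open {X :: 'a::{real_normed_field, euclidean_space}^'n^'n. invertible X}"
proof -
  have "continuous_on UNIV (det :: 'a^'n^'n \<Rightarrow> 'a)"
    by (rule differentiable_imp_continuous_on)
       (simp add: differentiable_on_def differentiable_at_withinI differentiable_det_at)
  then show ?thesis
    by (simp add: invertible_det_nz open_Collect_neq continuous_on_const)
qed

lemma differentiable_matrix_inv:
  fixes X :: "'a::{real_normed_field, euclidean_space}^'n^'n"
  assumes X: "invertible X"
  shows "matrix_inv differentiable (at X)"
proof -
  let ?cramer = "\<lambda>Y. \<chi> k j. det (\<chi> a b. if b = k then (if a = j then 1 else 0) else Y $ a $ b) / det Y"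
  have column: "(\<lambda>Y. if b = k then c else Y $ a $ b) differentiable (at X)" for a b k c
    by (cases "b = k") (simp_all add: differentiable_matrix_entry)
  have "?cramer differentiable (at X)"
    using X
    by (intro differentiable_vec_lambda differentiable_divide differentiable_det)
       (auto simp: column differentiable_det_at differentiable_matrix_entry invertible_det_nz)
  then obtain R' where "(?cramer has_derivative R') (at X)"
    unfolding differentiable_def by blast
  moreover have "X \<in> {X. invertible X}"
    using X by simp
  ultimately have "(matrix_inv has_derivative R') (at X)"
    by (rule has_derivative_transform_within_open[OF _ open_invertible])
       (auto simp: vec_eq_iff matrix_inv_cramer invertible_det_nz)
  then show ?thesis
    unfolding differentiable_def by blast
qed

text \<open>Differentiating X ** matrix_inv X = mat 1 determines the derivative.\<close>
lemma has_derivative_matrix_inv: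
  fixes X :: "'a::{real_normed_field, euclidean_space}^'n^'n"
  assumes X: "invertible X"
  shows "(matrix_inv has_derivative (\<lambda>H. - (matrix_inv X ** H ** matrix_inv X))) (at X)"
proof -
  obtain R' where R': "(matrix_inv has_derivative R') (at X)"
    using differentiable_matrix_inv[OF X] unfolding differentiable_def by blast
  have "((\<lambda>Y. Y ** matrix_inv Y) has_derivative (\<lambda>H. X ** R' H + H ** matrix_inv X)) (at X)"
    by (rule bounded_bilinear.FDERIV[OF bounded_bilinear_matrix_mult has_derivative_ident R'])
  moreover have "((\<lambda>Y. Y ** matrix_inv Y) has_derivative (\<lambda>H. 0)) (at X)"
    using has_derivative_const open_invertible
    by (rule has_derivative_transform_within_open) (use X in \<open>auto simp: matrix_inv_right\<close>)
  ultimately have "(\<lambda>H. X ** R' H + H ** matrix_inv X) = (\<lambda>H. 0)"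
    by (rule has_derivative_unique)
  then have XR': "X ** R' H = - (H ** matrix_inv X)" for H
    by (simp add: fun_eq_iff eq_neg_iff_add_eq_0)
  have "R' = (\<lambda>H. - (matrix_inv X ** H ** matrix_inv X))"
  proof
    fix H
    have "R' H = matrix_inv X ** (X ** R' H)"
      by (simp add: matrix_mul_assoc matrix_inv_left[OF X])
    then show "R' H = - (matrix_inv X ** H ** matrix_inv X)"
      by (simp add: XR' matrix_mul_uminus_right matrix_mul_assoc)
  qed
  with R' show ?thesis
    by simp
qed

lemma has_derivative_left_mult_fst:
  "((\<lambda>p. X ** fst p) has_derivative (\<lambda>v. X ** fst v)) (at p)"
  for X :: "'a::{real_normed_field, euclidean_space}^'k^'m" and p :: "('a^'n^'k) \<times> 'b::real_normed_vector"
  by (rule bounded_linear.has_derivative[OF bounded_bilinear.bounded_linear_right[OF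
        bounded_bilinear_matrix_mult] has_derivative_fst[OF has_derivative_ident]])

section \<open>Isometries and the Heisenberg translations\<close>

text \<open>The derivative is also required to keep the Z-component of tangent vectors symmetric,
  so that isometries compose.\<close>
definition ds2_isometry ::
  "real \<Rightarrow> real \<Rightarrow> ((complex^'n^'n) \<times> (complex^'n^'m) \<Rightarrow> (complex^'n^'n) \<times> (complex^'n^'m)) \<Rightarrow> bool"
  where "ds2_isometry a b f \<longleftrightarrow>
    (\<forall>p \<in> siegel_jacobi. f p \<in> siegel_jacobi \<and>
      (\<exists>f'. (f has_derivative f') (at p) \<and>
        (\<forall>v. symmetric_mat (fst v) \<longrightarrow>
          symmetric_mat (fst (f' v)) \<and> ds2 a b (f p) (f' v) = ds2 a b p v)))"

lemma ds2_isometryI: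
  assumes "\<And>p. p \<in> siegel_jacobi \<Longrightarrow> f p \<in> siegel_jacobi"
    and "\<And>p. p \<in> siegel_jacobi \<Longrightarrow> (f has_derivative f' p) (at p)"
    and "\<And>p v. p \<in> siegel_jacobi \<Longrightarrow> symmetric_mat (fst v) \<Longrightarrow> symmetric_mat (fst (f' p v))"
    and "\<And>p v. p \<in> siegel_jacobi \<Longrightarrow> symmetric_mat (fst v) \<Longrightarrow> ds2 a b (f p) (f' p v) = ds2 a b p v"
  shows "ds2_isometry a b f"
  using assms unfolding ds2_isometry_def by blast

lemma ds2_isometry_comp:
  fixes f g :: "(complex^'n^'n) \<times> (complex^'n^'m) \<Rightarrow> (complex^'n^'n) \<times> (complex^'n^'m)"
  assumes f: "ds2_isometry a b f" and g: "ds2_isometry a b g"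
  shows "ds2_isometry a b (f \<circ> g)"
  unfolding ds2_isometry_def
proof
  fix p :: "(complex^'n^'n) \<times> (complex^'n^'m)"
  assume p: "p \<in> siegel_jacobi"
  obtain g' where g': "(g has_derivative g') (at p)"
    "\<And>v. symmetric_mat (fst v) \<Longrightarrow> symmetric_mat (fst (g' v)) \<and> ds2 a b (g p) (g' v) = ds2 a b p v"
    and gp: "g p \<in> siegel_jacobi"
    using g p unfolding ds2_isometry_def by blast
  obtain f' where f': "(f has_derivative f') (at (g p))"
    "\<And>v. symmetric_mat (fst v) \<Longrightarrow> symmetric_mat (fst (f' v)) \<and> ds2 a b (f (g p)) (f' v) = ds2 a b (g p) v"
    and fgp: "f (g p) \<in> siegel_jacobi"
    using f gp unfolding ds2_isometry_def by blast
  have "(f \<circ> g has_derivative f' \<circ> g') (at p)"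
    by (rule diff_chain_at[OF g'(1) f'(1)])
  moreover have "symmetric_mat (fst ((f' \<circ> g') v)) \<and> ds2 a b ((f \<circ> g) p) ((f' \<circ> g') v) = ds2 a b p v"
    if "symmetric_mat (fst v)" for v
    using g'(2)[OF that] f'(2)[of "g' v"] by simp
  moreover have "(f \<circ> g) p \<in> siegel_jacobi"
    using fgp by simp
  ultimately show "(f \<circ> g) p \<in> siegel_jacobi \<and>
      (\<exists>h. (f \<circ> g has_derivative h) (at p) \<and>
        (\<forall>v. symmetric_mat (fst v) \<longrightarrow> symmetric_mat (fst (h v)) \<and> ds2 a b ((f \<circ> g) p) (h v) = ds2 a b p v))"
    by blast
qed

definition heis_shift ::
  "real^'n^'m \<Rightarrow> real^'n^'m \<Rightarrow> (complex^'n^'n) \<times> (complex^'n^'m) \<Rightarrow> (complex^'n^'n) \<times> (complex^'n^'m)"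
  where "heis_shift l u p = (fst p, snd p + cmat l ** fst p + cmat u)"

lemma ds2_heis_shift:
  assumes "posdef (mIm Z)" and "symmetric_mat dZ"
  shows "ds2 a b (heis_shift l u (Z, W)) (dZ, dW + cmat l ** dZ) = ds2 a b (Z, W) (dZ, dW)"
proof -
  have YQ: "cmat (mIm Z) ** cmat (matrix_inv (mIm Z)) = mat 1"
    using matrix_inv_right[OF posdef_invertible[OF assms(1)]] by (simp add: cmat_mult [symmetric] cmat_mat)
  have "cmat (mIm (W + cmat l ** Z + cmat u)) = cmat (mIm W) + cmat l ** cmat (mIm Z)"
    by (simp add: mIm_add mIm_cmat_mult cmat_add cmat_mult)
  then show ?thesis
    using assms
    by (simp add: heis_shift_def ds2_completed_square matrix_add_rdistrib matrix_mul_assoc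
        matrix_mul_cancel_right[OF YQ])
qed

lemma ds2_isometry_heis_shift: "ds2_isometry a b (heis_shift l u)"
proof (rule ds2_isometryI)
  show "heis_shift l u p \<in> siegel_jacobi" if "p \<in> siegel_jacobi" for p
    using that by (simp add: heis_shift_def siegel_jacobi_def mem_Times_iff)
  show "(heis_shift l u has_derivative (\<lambda>v. (fst v, snd v + cmat l ** fst v))) (at p)" for p
    unfolding heis_shift_def
    by (intro has_derivative_Pair has_derivative_add_const has_derivative_add has_derivative_left_mult_fst
        has_derivative_fst[OF has_derivative_ident] has_derivative_snd[OF has_derivative_ident])
  show "symmetric_mat (fst (fst v, snd v + cmat l ** fst v))" if "symmetric_mat (fst v)" for v
    using that by simp
  show "ds2 a b (heis_shift l u p) (fst v, snd v + cmat l ** fst v) = ds2 a b p v"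
    if "p \<in> siegel_jacobi" and "symmetric_mat (fst v)" for p v
    using that ds2_heis_shift[of "fst p" "fst v" a b l u "snd p" "snd v"]
    by (auto simp: siegel_jacobi_def siegel_H_def mem_Times_iff)
qed

section \<open>The symplectic action\<close>

locale symplectic_blocks =
  fixes A B C D :: "complex^'n^'n"
  assumes real_blocks: "mconj A = A" "mconj B = B" "mconj C = C" "mconj D = D"
    and symplectic: "transpose A ** C = transpose C ** A"
      "transpose A ** D - transpose C ** B = mat 1"
      "transpose B ** D = transpose D ** B"
begin

lemma transpose_C_B: "transpose C ** B = transpose A ** D - mat 1"
proof -
  have "transpose C ** B = transpose A ** D - (transpose A ** D - transpose C ** B)"
    by simp
  then show ?thesis
    by (simp only: symplectic(2))
qed

lemma transpose_D_A: "transpose D ** A = transpose B ** C + mat 1"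
  using arg_cong[OF symplectic(2), of transpose]
  by (simp add: transpose_diff matrix_transpose_mul algebra_simps)

text \<open>Specialised to Z1 = Z2 = Z and to Z1 = conj Z, Z2 = Z, this gives the symmetry and the
  imaginary part of (AZ + B)(CZ + D)^-1.\<close>
lemma cross_identity:
  assumes "symmetric_mat Z1" and "symmetric_mat Z2"
  shows "transpose (C ** Z1 + D) ** (A ** Z2 + B) - transpose (A ** Z1 + B) ** (C ** Z2 + D) = Z2 - Z1"
proof -
  have CA: "X ** transpose C ** A = X ** transpose A ** C" for X :: "complex^'n^'n"
    by (simp add: symplectic(1) matrix_mul_assoc [symmetric])
  have CB: "X ** transpose C ** B = X ** transpose A ** D - X" for X :: "complex^'n^'n"
    by (simp add: transpose_C_B matrix_mul_assoc [symmetric] matrix_diff_ldistrib)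
  show ?thesis
    using assms
    by (simp add: symmetric_mat_def transpose_add matrix_transpose_mul matrix_add_ldistrib
        matrix_add_rdistrib matrix_mul_assoc CA CB transpose_D_A symplectic(3))
qed

lemma transpose_denom_A_minus_transpose_numer_C:
  assumes "symmetric_mat Z"
  shows "transpose (C ** Z + D) ** A - transpose (A ** Z + B) ** C = mat 1"
  using assms
  by (simp add: symmetric_mat_def transpose_add matrix_transpose_mul matrix_add_rdistrib
      matrix_mul_assoc [symmetric] symplectic(1) transpose_D_A)

lemma mconj_denom: "mconj (C ** Z + D) = C ** mconj Z + D"
  by (simp add: mconj_add mconj_mult real_blocks)

lemma mconj_numer: "mconj (A ** Z + B) = A ** mconj Z + B"
  by (simp add: mconj_add mconj_mult real_blocks)

end

locale symplectic_point = symplectic_blocks A B C D for A B C D :: "complex^'n^'n" +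
  fixes Z :: "complex^'n^'n"
  assumes Z: "Z \<in> siegel_H"
begin

abbreviation "P \<equiv> C ** Z + D"
abbreviation "N \<equiv> A ** Z + B"
abbreviation "R \<equiv> matrix_inv P"
abbreviation "Q \<equiv> cmat (matrix_inv (mIm Z))"
abbreviation "Q' \<equiv> cmat (matrix_inv (mIm (N ** R)))"

lemma Z_symmetric: "symmetric_mat Z"
  and Im_Z_posdef: "posdef (mIm Z)"
  using Z by (simp_all add: siegel_H_def)

lemma denom_numer_adjoint_diff: "transpose (mconj P) ** N - transpose (mconj N) ** P = Z - mconj Z"
  using cross_identity[of "mconj Z" Z] Z_symmetric
  by (simp add: mconj_denom mconj_numer symmetric_mat_def mconj_transpose [symmetric])

lemma invertible_P: "invertible P"
  unfolding invertible_iff_ker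
proof (intro allI impI)
  fix x assume Px: "P *v x = 0"
  define X :: "complex^1^'n" where "X = columnvector x"
  have PX: "P ** X = 0"
    unfolding X_def dot_rowvector_columnvector [symmetric] Px by (simp add: columnvector_def vec_eq_iff)
  have "transpose (mconj X) ** (Z - mconj Z) ** X
      = transpose (mconj (P ** X)) ** N ** X - transpose (mconj X) ** transpose (mconj N) ** (P ** X)"
    unfolding denom_numer_adjoint_diff [symmetric]
    by (simp add: matrix_diff_ldistrib matrix_diff_rdistrib matrix_transpose_mul mconj_mult
        matrix_mul_assoc)
  then have "mat (2 * \<i>) ** (transpose (mconj X) ** cmat (mIm Z) ** X) = mat (2 * \<i>) ** 0"
    by (simp add: PX hermitian_form_diff_mconj [symmetric])
  then have "transpose (mconj X) ** cmat (mIm Z) ** X = 0"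
    by (subst (asm) mat_mult_cancel) auto
  then have "X = 0"
    using Re_trace_hermitian_form_pos[OF Im_Z_posdef, of X] by (auto simp: trace_def)
  then show "x = 0"
    by (simp add: X_def columnvector_def vec_eq_iff)
qed

lemma P_R [simp]: "P ** R = mat 1"
  and R_P [simp]: "R ** P = mat 1"
  using matrix_inv_right[OF invertible_P] matrix_inv_left[OF invertible_P] by simp_all

lemma transpose_P_R [simp]: "transpose P ** transpose R = mat 1"
  and transpose_R_P [simp]: "transpose R ** transpose P = mat 1"
  and mconj_P_R [simp]: "mconj P ** mconj R = mat 1"
  and mconj_R_P [simp]: "mconj R ** mconj P = mat 1"
  and adjoint_P_R [simp]: "transpose (mconj P) ** transpose (mconj R) = mat 1"
  and adjoint_R_P [simp]: "transpose (mconj R) ** transpose (mconj P) = mat 1"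
  by (simp_all flip: matrix_transpose_mul mconj_mult)

lemmas cancel_P_R = matrix_mul_cancel_right[OF P_R] matrix_mul_cancel_right[OF R_P]
  matrix_mul_cancel_right[OF transpose_P_R] matrix_mul_cancel_right[OF transpose_R_P]
  matrix_mul_cancel_right[OF mconj_P_R] matrix_mul_cancel_right[OF mconj_R_P]
  matrix_mul_cancel_right[OF adjoint_P_R] matrix_mul_cancel_right[OF adjoint_R_P]

lemma moebius_symmetric: "symmetric_mat (N ** R)"
proof -
  have PN: "transpose P ** N = transpose N ** P"
    using cross_identity[OF Z_symmetric Z_symmetric] by simp
  have "transpose (N ** R) = transpose R ** transpose N ** P ** R"
    by (simp add: matrix_transpose_mul matrix_mul_assoc [symmetric])
  also have "\<dots> = transpose R ** (transpose P ** N) ** R"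
    by (simp add: PN matrix_mul_assoc)
  also have "\<dots> = N ** R"
    by (simp add: matrix_mul_assoc)
  finally show ?thesis
    by (simp add: symmetric_mat_def)
qed

lemma moebius_Im: "cmat (mIm (N ** R)) = transpose (mconj R) ** cmat (mIm Z) ** R"
proof -
  have "mconj (N ** R) = transpose (mconj R) ** transpose (mconj N)"
    using moebius_symmetric
    by (metis matrix_transpose_mul mconj_mult mconj_transpose symmetric_mat_def)
  then have "N ** R - mconj (N ** R) = transpose (mconj R) ** (Z - mconj Z) ** R"
    unfolding denom_numer_adjoint_diff [symmetric]
    by (simp add: matrix_diff_ldistrib matrix_diff_rdistrib matrix_mul_assoc cancel_P_R)
  then have "mat (2 * \<i>) ** cmat (mIm (N ** R)) = mat (2 * \<i>) ** (transpose (mconj R) ** cmat (mIm Z) ** R)"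
    by (simp add: diff_mconj_eq_mIm matrix_mul_assoc matrix_mul_mat_commute)
  then show ?thesis
    by (subst (asm) mat_mult_cancel) auto
qed

lemma moebius_in_siegel_H: "N ** R \<in> siegel_H"
  unfolding siegel_H_def
proof (intro CollectI conjI moebius_symmetric)
  show "posdef (mIm (N ** R))"
    unfolding posdef_def
  proof (intro conjI allI impI)
    show "symmetric_mat (mIm (N ** R))"
      using moebius_symmetric by (simp add: symmetric_mat_def mIm_transpose [symmetric])
    fix x :: "real^'n" assume "x \<noteq> 0"
    define X :: "complex^1^'n" where "X = cmat (columnvector x)"
    have "R ** X \<noteq> 0"
    proof
      assume "R ** X = 0"
      then have "X = 0" by (metis P_R matrix_mul_assoc matrix_mul_lid times0_right)
      then show False
        using \<open>x \<noteq> 0\<close> by (simp add: X_def cmat_def columnvector_def vec_eq_iff)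
    qed
    have "x \<bullet> (mIm (N ** R) *v x) = Re (trace (transpose (mconj X) ** cmat (mIm (N ** R)) ** X))"
      unfolding Re_trace_hermitian_form
      by (simp add: X_def sum_1 columnvector_def column_def zero_vec_def [symmetric])
    also have "\<dots> = Re (trace (transpose (mconj (R ** X)) ** cmat (mIm Z) ** (R ** X)))"
      by (simp add: moebius_Im X_def matrix_transpose_mul mconj_mult matrix_mul_assoc)
    finally show "0 < x \<bullet> (mIm (N ** R) *v x)"
      using Re_trace_hermitian_form_pos[OF Im_Z_posdef \<open>R ** X \<noteq> 0\<close>] by simp
  qed
qed

lemma Im_moebius_posdef: "posdef (mIm (N ** R))"
  using moebius_in_siegel_H by (simp add: siegel_H_def)

lemma Im_mult_Q: "cmat (mIm Z) ** Q = mat 1"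
  using matrix_inv_right[OF posdef_invertible[OF Im_Z_posdef]]
  by (simp add: cmat_mult [symmetric] cmat_mat)

lemma inv_Im_moebius: "Q' = mconj P ** Q ** transpose P"
proof -
  have "cmat (mIm (N ** R)) = transpose (cmat (mIm (N ** R)))"
    using Im_moebius_posdef by (simp add: cmat_transpose [symmetric] posdef_def symmetric_mat_def)
  also have "\<dots> = transpose R ** cmat (mIm Z) ** mconj R"
    using Im_Z_posdef
    by (simp add: moebius_Im matrix_transpose_mul cmat_transpose [symmetric] posdef_def
        symmetric_mat_def mconj_transpose matrix_mul_assoc)
  finally have "cmat (mIm (N ** R)) ** (mconj P ** cmat (matrix_inv (mIm Z)) ** transpose P) = mat 1"
    by (simp add: matrix_mul_assoc cancel_P_R matrix_mul_cancel_right[OF Im_mult_Q])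
  then show ?thesis
    by (simp add: cmat_matrix_inv posdef_invertible[OF Im_moebius_posdef] matrix_inv_unique)
qed

lemma moebius_derivative_factor: "A - N ** R ** C = transpose R"
proof -
  have "transpose P ** (A - N ** R ** C) = transpose P ** A - transpose N ** C"
    using cross_identity[OF Z_symmetric Z_symmetric]
    by (simp add: matrix_diff_ldistrib matrix_mul_assoc cancel_P_R eq_iff_diff_eq_0 [symmetric])
  also have "\<dots> = mat 1"
    by (rule transpose_denom_A_minus_transpose_numer_C[OF Z_symmetric])
  finally have "transpose P ** (A - N ** R ** C) = mat 1" .
  then have "transpose R ** (transpose P ** (A - N ** R ** C)) = transpose R"
    by simp
  then show ?thesis
    by (simp add: matrix_mul_assoc)
qed

lemma Im_mult_R:
  "cmat (mIm (W ** R)) ** mconj P = cmat (mIm W) - W ** R ** C ** cmat (mIm Z)"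
proof -
  have P: "mconj P = P - C ** (Z - mconj Z)"
    by (simp add: mconj_denom matrix_diff_ldistrib)
  have "mat (2 * \<i>) ** (cmat (mIm (W ** R)) ** mconj P) = (W ** R - mconj (W ** R)) ** mconj P"
    by (simp add: diff_mconj_eq_mIm matrix_mul_assoc)
  also have "\<dots> = W ** R ** mconj P - mconj W ** mconj R ** mconj P"
    by (simp add: matrix_diff_rdistrib mconj_mult)
  also have "W ** R ** mconj P = W ** R ** P - W ** R ** (C ** (Z - mconj Z))"
    by (subst P) (rule matrix_diff_ldistrib)
  also have "\<dots> = W - W ** R ** C ** (Z - mconj Z)"
    by (simp add: matrix_mul_assoc cancel_P_R)
  also have "mconj W ** mconj R ** mconj P = mconj W"
    by (simp add: cancel_P_R)
  also have "W - W ** R ** C ** (Z - mconj Z) - mconj W = (W - mconj W) - W ** R ** C ** (Z - mconj Z)"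
    by simp
  also have "\<dots> = mat (2 * \<i>) ** (cmat (mIm W) - W ** R ** C ** cmat (mIm Z))"
    by (simp add: diff_mconj_eq_mIm matrix_diff_ldistrib matrix_mul_assoc matrix_mul_mat_commute)
  finally show ?thesis
    by (subst (asm) mat_mult_cancel) auto
qed

lemma inv_Im_moebius_mconj: "Q' = P ** Q ** transpose (mconj P)"
  using arg_cong[OF inv_Im_moebius, of mconj] by (simp add: mconj_mult mconj_transpose)

lemma trace_dZ_moebius:
  "trace (Q' ** (transpose R ** dZ ** R) ** Q' ** mconj (transpose R ** dZ ** R))
     = trace (Q ** dZ ** Q ** mconj dZ)"
proof -
  have "Q' ** (transpose R ** dZ ** R) ** Q' ** mconj (transpose R ** dZ ** R)
      = (mconj P ** Q ** transpose P) ** (transpose R ** dZ ** R) ** (P ** Q ** transpose (mconj P))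
        ** mconj (transpose R ** dZ ** R)"
    using arg_cong2[where f = "\<lambda>U V. U ** (transpose R ** dZ ** R) ** V ** mconj (transpose R ** dZ ** R)",
        OF inv_Im_moebius inv_Im_moebius_mconj] .
  also have "\<dots> = mconj P ** (Q ** dZ ** Q ** mconj dZ ** mconj R)"
    by (simp add: mconj_mult mconj_transpose matrix_mul_assoc cancel_P_R)
  finally show ?thesis
    by (simp add: trace_mul_sym[of "mconj P"] cancel_P_R)
qed

lemma trace_dW_moebius:
  "trace (Q' ** transpose (E ** R) ** mconj (E ** R)) = trace (Q ** transpose E ** mconj E)"
proof -
  have "trace (Q' ** transpose (E ** R) ** mconj (E ** R))
      = trace (mconj P ** (Q ** transpose E ** mconj E ** mconj R))"
    by (simp add: inv_Im_moebius matrix_transpose_mul mconj_mult matrix_mul_assoc cancel_P_R)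
  also have "\<dots> = trace (Q ** transpose E ** mconj E)"
    by (simp add: trace_mul_sym[of "mconj P"] cancel_P_R)
  finally show ?thesis .
qed

lemma E_moebius:
  "dW ** R - W ** R ** C ** dZ ** R - cmat (mIm (W ** R)) ** Q' ** (transpose R ** dZ ** R)
     = (dW - cmat (mIm W) ** Q ** dZ) ** R"
proof -
  have "cmat (mIm (W ** R)) ** Q' ** (transpose R ** dZ ** R)
      = (cmat (mIm W) - W ** R ** C ** cmat (mIm Z)) ** Q ** dZ ** R"
    by (simp add: inv_Im_moebius matrix_mul_assoc cancel_P_R flip: Im_mult_R)
  also have "\<dots> = cmat (mIm W) ** Q ** dZ ** R - W ** R ** C ** dZ ** R"
    by (simp add: matrix_diff_rdistrib matrix_mul_assoc matrix_mul_cancel_right[OF Im_mult_Q])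
  finally show ?thesis
    by (simp add: matrix_diff_rdistrib)
qed

lemma ds2_symp_act:
  assumes dZ: "symmetric_mat dZ"
  shows "ds2 a b (N ** R, W ** R) (transpose R ** dZ ** R, dW ** R - W ** R ** C ** dZ ** R)
       = ds2 a b (Z, W) (dZ, dW)"
proof -
  have "symmetric_mat (transpose R ** dZ ** R)"
    using dZ by (simp add: symmetric_mat_def matrix_transpose_mul matrix_mul_assoc)
  then show ?thesis
    by (simp add: ds2_completed_square[OF Im_Z_posdef dZ] ds2_completed_square[OF Im_moebius_posdef]
        E_moebius trace_dZ_moebius trace_dW_moebius)
qed

end

context symplectic_blocks
begin

definition symp_act :: "(complex^'n^'n) \<times> (complex^'n^'m) \<Rightarrow> (complex^'n^'n) \<times> (complex^'n^'m)"
  where "symp_act p = (let R = matrix_inv (C ** fst p + D) in ((A ** fst p + B) ** R, snd p ** R))"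

definition symp_act_deriv ::
  "(complex^'n^'n) \<times> (complex^'n^'m) \<Rightarrow> (complex^'n^'n) \<times> (complex^'n^'m) \<Rightarrow> (complex^'n^'n) \<times> (complex^'n^'m)"
  where "symp_act_deriv p v = (let R = matrix_inv (C ** fst p + D)
    in (transpose R ** fst v ** R, snd v ** R - snd p ** R ** C ** fst v ** R))"

lemma has_derivative_symp_act:
  fixes W :: "complex^'n^'m"
  assumes Z: "Z \<in> siegel_H"
  shows "(symp_act has_derivative symp_act_deriv (Z, W)) (at (Z, W))"
proof -
  interpret symplectic_point A B C D Z
    using Z by unfold_locales
  have "((\<lambda>p. C ** fst p + D) has_derivative (\<lambda>v. C ** fst v)) (at (Z, W))"
    by (intro has_derivative_add_const has_derivative_left_mult_fst)
  moreover have "(matrix_inv has_derivative (\<lambda>H. - (R ** H ** R))) (at (C ** fst (Z, W) + D))"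
    using has_derivative_matrix_inv[OF invertible_P] by simp
  ultimately have inv: "((\<lambda>p. matrix_inv (C ** fst p + D)) has_derivative (\<lambda>v. - (R ** (C ** fst v) ** R)))
      (at (Z, W))"
    by (rule has_derivative_compose)
  have numer: "((\<lambda>p. A ** fst p + B) has_derivative (\<lambda>v. A ** fst v)) (at (Z, W))"
    by (intro has_derivative_add_const has_derivative_left_mult_fst)
  have "((\<lambda>p. (A ** fst p + B) ** matrix_inv (C ** fst p + D))
      has_derivative (\<lambda>v. N ** (- (R ** (C ** fst v) ** R)) + A ** fst v ** R)) (at (Z, W))"
    using bounded_bilinear.FDERIV[OF bounded_bilinear_matrix_mult numer inv] by simp
  moreover have "((\<lambda>p. snd p ** matrix_inv (C ** fst p + D))
      has_derivative (\<lambda>v. W ** (- (R ** (C ** fst v) ** R)) + snd v ** R)) (at (Z, W))"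
    using bounded_bilinear.FDERIV[OF bounded_bilinear_matrix_mult
        has_derivative_snd[OF has_derivative_ident] inv]
    by simp
  ultimately have "((\<lambda>p. ((A ** fst p + B) ** matrix_inv (C ** fst p + D), snd p ** matrix_inv (C ** fst p + D)))
      has_derivative (\<lambda>v. (N ** (- (R ** (C ** fst v) ** R)) + A ** fst v ** R,
                            W ** (- (R ** (C ** fst v) ** R)) + snd v ** R))) (at (Z, W))"
    by (rule has_derivative_Pair)
  moreover have "N ** (- (R ** (C ** dZ) ** R)) + A ** dZ ** R = transpose R ** dZ ** R" for dZ
    using moebius_derivative_factor
    by (simp add: matrix_mul_uminus_right matrix_mul_assoc matrix_diff_rdistrib [symmetric])
  ultimately have "((\<lambda>p. ((A ** fst p + B) ** matrix_inv (C ** fst p + D), snd p ** matrix_inv (C ** fst p + D)))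
      has_derivative (\<lambda>v. (transpose R ** fst v ** R, snd v ** R - W ** R ** C ** fst v ** R))) (at (Z, W))"
    by (simp add: matrix_mul_uminus_right matrix_mul_assoc)
  moreover have "symp_act_deriv (Z, W) = (\<lambda>v. (transpose R ** fst v ** R, snd v ** R - W ** R ** C ** fst v ** R))"
    by (simp add: fun_eq_iff symp_act_deriv_def Let_def)
  moreover have "symp_act = (\<lambda>p :: (complex^'n^'n) \<times> (complex^'n^'m). ((A ** fst p + B) ** matrix_inv (C ** fst p + D),
      snd p ** matrix_inv (C ** fst p + D)))"
    by (simp add: fun_eq_iff symp_act_def Let_def)
  ultimately show ?thesis
    by simp
qed

lemma ds2_isometry_symp_act: "ds2_isometry a b symp_act"
proof (rule ds2_isometryI[where f' = symp_act_deriv])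
  fix p :: "(complex^'n^'n) \<times> (complex^'n^'m)"
  assume "p \<in> siegel_jacobi"
  then obtain Z W where p: "p = (Z, W)" and Z: "Z \<in> siegel_H"
    by (auto simp: siegel_jacobi_def)
  interpret symplectic_point A B C D Z
    using Z by unfold_locales
  have act: "symp_act (Z, W) = (N ** R, W ** R)"
    by (simp add: symp_act_def Let_def)
  have deriv: "symp_act_deriv (Z, W) v = (transpose R ** fst v ** R, snd v ** R - W ** R ** C ** fst v ** R)"
    for v
    by (simp add: symp_act_deriv_def Let_def)
  show "symp_act p \<in> siegel_jacobi"
    by (simp add: p act siegel_jacobi_def moebius_in_siegel_H)
  show "(symp_act has_derivative symp_act_deriv p) (at p)"
    using has_derivative_symp_act[OF Z] by (simp add: p)
  fix v :: "(complex^'n^'n) \<times> (complex^'n^'m)"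
  assume v: "symmetric_mat (fst v)"
  then show "symmetric_mat (fst (symp_act_deriv p v))"
    by (simp add: p deriv symmetric_mat_def matrix_transpose_mul matrix_mul_assoc)
  show "ds2 a b (symp_act p) (symp_act_deriv p v) = ds2 a b p v"
    using ds2_symp_act[OF v, of a b W "snd v"] by (simp add: act deriv p)
qed

end

section \<open>The Jacobi group\<close>

lemma sum_UNIV_Plus:
  "(\<Sum>x\<in>UNIV. f x) = (\<Sum>a\<in>UNIV. f (Inl a)) + (\<Sum>b\<in>UNIV. f (Inr b))"
  for f :: "'a::finite + 'b::finite \<Rightarrow> 'c::comm_monoid_add"
  using sum.Plus[of "UNIV :: 'a set" "UNIV :: 'b set" f] by (simp add: o_def)

lemma transpose_mult_J_mult_nth:
  fixes M :: "real^('n::finite + 'n)^('n + 'n)"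
  shows "(transpose M ** J_mat ** M) $ x $ y
       = (\<Sum>a\<in>UNIV. M $ Inl a $ x * M $ Inr a $ y - M $ Inr a $ x * M $ Inl a $ y)"
proof -
  have "(transpose M ** J_mat) $ x $ Inl b = - M $ Inr b $ x"
    and "(transpose M ** J_mat) $ x $ Inr b = M $ Inl b $ x" for b
    by (simp_all add: matrix_matrix_mult_def transpose_def sum_UNIV_Plus J_mat_def if_distrib
        cong: if_cong)
  then show ?thesis
    by (simp add: matrix_matrix_mult_def [of "transpose M ** J_mat" M] sum_UNIV_Plus sum_subtractf
        sum_negf add.commute)
qed

lemma Sp_block_relations:
  fixes M :: "real^('n::finite + 'n)^('n + 'n)"
  assumes "M \<in> Sp"
  shows "transpose (blkA M) ** blkC M = transpose (blkC M) ** blkA M"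
    and "transpose (blkA M) ** blkD M - transpose (blkC M) ** blkB M = mat 1"
    and "transpose (blkB M) ** blkD M = transpose (blkD M) ** blkB M"
proof -
  have J: "(\<Sum>a\<in>UNIV. M $ Inl a $ x * M $ Inr a $ y - M $ Inr a $ x * M $ Inl a $ y) = J_mat $ x $ y" for x y
    using assms transpose_mult_J_mult_nth[of M x y] by (simp add: Sp_def)
  show "transpose (blkA M) ** blkC M = transpose (blkC M) ** blkA M"
    using J[of "Inl _" "Inl _"]
    by (simp add: vec_eq_iff J_mat_def matrix_matrix_mult_def transpose_def blkA_def blkC_def
        sum_subtractf)
  show "transpose (blkA M) ** blkD M - transpose (blkC M) ** blkB M = mat 1"
    using J[of "Inl _" "Inr _"]
    by (simp add: vec_eq_iff J_mat_def matrix_matrix_mult_def transpose_def blkA_def blkB_def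
        blkC_def blkD_def sum_subtractf mat_def)
  show "transpose (blkB M) ** blkD M = transpose (blkD M) ** blkB M"
    using J[of "Inr _" "Inr _"]
    by (simp add: vec_eq_iff J_mat_def matrix_matrix_mult_def transpose_def blkB_def blkD_def
        sum_subtractf)
qed

lemma Sp_symplectic_blocks:
  assumes "M \<in> Sp"
  shows "symplectic_blocks (cmat (blkA M)) (cmat (blkB M)) (cmat (blkC M)) (cmat (blkD M))"
  using Sp_block_relations[OF assms]
  by unfold_locales (simp_all flip: cmat_transpose cmat_mult cmat_diff add: cmat_mat)

lemma ds2_isometry_jacobi_act:
  assumes "g \<in> jacobi_group"
  shows "ds2_isometry a b (jacobi_act g)"
proof -
  obtain M l u k where g: "g = (M, (l, u, k))" and M: "M \<in> Sp"
    using assms by (auto simp: jacobi_group_def)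
  interpret symplectic_blocks "cmat (blkA M)" "cmat (blkB M)" "cmat (blkC M)" "cmat (blkD M)"
    by (rule Sp_symplectic_blocks[OF M])
  have "jacobi_act g = symp_act \<circ> heis_shift l u"
    by (simp add: g fun_eq_iff jacobi_act_def symp_act_def heis_shift_def Let_def)
  then show ?thesis
    by (simp add: ds2_isometry_comp ds2_isometry_symp_act ds2_isometry_heis_shift)
qed

theorem theorem1p1:
  fixes a b :: real
  assumes "a > 0" and "b > 0"
  shows "(\<forall>(p :: (complex^'n^'n) \<times> (complex^'n^'m)) \<in> siegel_jacobi.
            \<forall>v :: (complex^'n^'n) \<times> (complex^'n^'m).
              symmetric_mat (fst v) \<longrightarrow>
                Im (ds2 a b p v) = 0 \<and> (v \<noteq> 0 \<longrightarrow> Re (ds2 a b p v) > 0))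
       \<and> (\<forall>g \<in> (jacobi_group :: ((real^('n+'n)^('n+'n)) \<times> ((real^'n^'m) \<times> (real^'n^'m) \<times> (real^'m^'m))) set).
            \<forall>p \<in> siegel_jacobi.
              jacobi_act g p \<in> siegel_jacobi \<and>
              (\<exists>f'. (jacobi_act g has_derivative f') (at p) \<and>
                 (\<forall>v. symmetric_mat (fst v) \<longrightarrow>
                    ds2 a b (jacobi_act g p) (f' v) = ds2 a b p v)))"
proof -
  have "jacobi_act g p \<in> siegel_jacobi \<and>
      (\<exists>f'. (jacobi_act g has_derivative f') (at p) \<and>
        (\<forall>v. symmetric_mat (fst v) \<longrightarrow> ds2 a b (jacobi_act g p) (f' v) = ds2 a b p v))"
    if g: "g \<in> jacobi_group" and p: "p \<in> siegel_jacobi"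
    for g :: "(real^('n+'n)^('n+'n)) \<times> ((real^'n^'m) \<times> (real^'n^'m) \<times> (real^'m^'m))"
      and p :: "(complex^'n^'n) \<times> (complex^'n^'m)"
  proof -
    obtain f' where "jacobi_act g p \<in> siegel_jacobi" "(jacobi_act g has_derivative f') (at p)"
      "\<And>v. symmetric_mat (fst v) \<Longrightarrow> ds2 a b (jacobi_act g p) (f' v) = ds2 a b p v"
      using ds2_isometry_jacobi_act[OF g, of a b] p unfolding ds2_isometry_def by blast
    then show ?thesis by blast
  qed
  then show ?thesis
    using ds2_positive[OF assms] by blast
qed

end
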